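(* For all positive integers $\Delta$ and positive reals $\xi$ there are positive constants $\nu$ and $c$ such that if $p\ge c(\log n/n)^{1/\Delta}$, then the following holds a.a.s. for $\Gamma=G(n,p)$ on vertex set $V$. Let $X$ be any subset of $V$ and $\mathcal{F}$ any family of pairwise disjoint $\Delta$-sets in $V\setminus X$. If $|X|\le\nu np^\Delta|\mathcal{F}|$ and $|X|,|\mathcal{F}|\le\xi n$, then $\mathrm{stars}_\Gamma(X,\mathcal{F})\le p^\Delta|X||\mathcal{F}|+6\xi np^\Delta|\mathcal{F}|$.
   Context: $G(n,p)$ is the random graph on $[n]$ with edges present independently with probability $p$; a.a.s. means with probability tending to $1$ as $n\to\infty$ (simultaneously for all such $X,\mathcal{F}$). For a graph $G$, a vertex set $X$ and a family $\mathcal{F}$ of pairwise disjoint $\ell$-sets outside $X$, $\mathrm{stars}_G(X,\mathcal{F})$ is the number of pairs $(x,F)$ with $x\in X$, $F\in\mathcal{F}$ and $F\subseteq N_G(x)$. *)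

theory Defs
  imports Complex_Main
begin

text \<open>Graphs on vertex set {0..<n} are represented by their edge sets: sets of
  2-element vertex sets.\<close>

definition all_edges :: "nat \<Rightarrow> nat set set" where
  "all_edges n = {e. \<exists>x y. x < n \<and> y < n \<and> x \<noteq> y \<and> e = {x, y}}"

definition gnp_prob :: "nat \<Rightarrow> real \<Rightarrow> (nat set set \<Rightarrow> bool) \<Rightarrow> real" where
  "gnp_prob n p P =
     (\<Sum>E | E \<subseteq> all_edges n \<and> P E.
        p ^ card E * (1 - p) ^ (card (all_edges n) - card E))"

definition nbhd :: "nat set set \<Rightarrow> nat \<Rightarrow> nat set" where
  "nbhd E x = {y. {x, y} \<in> E}"

definition stars :: "nat set set \<Rightarrow> nat set \<Rightarrow> nat set set \<Rightarrow> nat" where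
  "stars E X \<F> = card {(x, F). x \<in> X \<and> F \<in> \<F> \<and> F \<subseteq> nbhd E x}"

end

theory Submission
  imports Defs "HOL-Real_Asymp.Real_Asymp"
begin

text \<open>A union bound over the sizes s = |X| and f = |\<F>| and over the choices of X and \<F>.
  Fix X and \<F> and let q = p^\<Delta>. The stars of distinct pairs (x, F) are edge-disjoint, since the
  members of \<F> are disjoint and avoid X; so k = \<lceil>6\<xi>nqf\<rceil> stars are present with probability at
  most C(sf, k) q^k \<le> (esfq/k)^k \<le> a^k, where a = es/(6\<xi>n) \<le> e/6. The hypothesis s \<le> \<nu>nqf with
  \<nu> = 3\<xi>/M gives k \<ge> 2Ms: the factor a^(Ms) absorbs the C(n, s) \<le> (en/s)^s choices of X once
  M is large in terms of \<xi>, and the remaining factor (e/6)^(k/2) absorbs the at most n^(\<Delta>f)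
  choices of \<F> as soon as nq \<ge> K log n. Every pair (s, f) then contributes at most n^-3, and there
  are at most n(\<xi>n + 1) such pairs.\<close>

section \<open>Probabilities in G(n, p)\<close>

lemma sum_Pow_binomial_weights:
  fixes p :: real
  assumes "finite W"
  shows "(\<Sum>E\<in>Pow W. p ^ card E * (1 - p) ^ (card W - card E)) = 1"
  using assms
proof (induction W rule: finite_induct)
  case empty
  then show ?case by simp
next
  case (insert a W)
  have "inj_on (insert a) (Pow W)"
    using insert.hyps unfolding inj_on_def by (metis PowD insert_ident subsetD)
  moreover have "Pow W \<inter> insert a ` Pow W = {}"
    using insert.hyps by auto
  ultimately have "(\<Sum>E\<in>Pow (insert a W). p ^ card E * (1 - p) ^ (card (insert a W) - card E))
     = (\<Sum>E\<in>Pow W. p ^ card E * (1 - p) ^ (Suc (card W) - card E)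
                   + p ^ card (insert a E) * (1 - p) ^ (Suc (card W) - card (insert a E)))"
    using insert.hyps by (simp add: Pow_insert sum.union_disjoint sum.reindex sum.distrib)
  also have "\<dots> = (\<Sum>E\<in>Pow W. p ^ card E * (1 - p) ^ (card W - card E))"
  proof (rule sum.cong[OF refl])
    fix E assume "E \<in> Pow W"
    then have "E \<subseteq> W" "finite E" "a \<notin> E"
      using insert.hyps finite_subset by auto
    then have "card E \<le> card W" "card (insert a E) = Suc (card E)"
      using insert.hyps by (simp_all add: card_mono)
    then show "p ^ card E * (1 - p) ^ (Suc (card W) - card E)
        + p ^ card (insert a E) * (1 - p) ^ (Suc (card W) - card (insert a E))
        = p ^ card E * (1 - p) ^ (card W - card E)"
      by (simp add: Suc_diff_le algebra_simps)
  qed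
  finally show ?case
    using insert.IH by simp
qed

lemma finite_all_edges: "finite (all_edges n)"
  by (rule finite_subset[of _ "Pow {0..<n}"]) (auto simp: all_edges_def)

lemma gnp_prob_mono:
  assumes "0 \<le> p" "p \<le> 1" "\<And>E. P E \<Longrightarrow> Q E"
  shows "gnp_prob n p P \<le> gnp_prob n p Q"
  unfolding gnp_prob_def by (rule sum_mono2) (use assms finite_all_edges in auto)

lemma gnp_prob_nonneg:
  assumes "0 \<le> p" "p \<le> 1"
  shows "0 \<le> gnp_prob n p P"
  unfolding gnp_prob_def by (rule sum_nonneg) (use assms in auto)

lemma gnp_prob_compl: "gnp_prob n p P + gnp_prob n p (\<lambda>E. \<not> P E) = 1"
proof -
  let ?w = "\<lambda>E. p ^ card E * (1 - p) ^ (card (all_edges n) - card E)"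
  have "gnp_prob n p P + gnp_prob n p (\<lambda>E. \<not> P E)
      = sum ?w ({E. E \<subseteq> all_edges n \<and> P E} \<union> {E. E \<subseteq> all_edges n \<and> \<not> P E})"
    unfolding gnp_prob_def by (rule sum.union_disjoint[symmetric]) (use finite_all_edges in auto)
  also have "{E. E \<subseteq> all_edges n \<and> P E} \<union> {E. E \<subseteq> all_edges n \<and> \<not> P E} = Pow (all_edges n)"
    by auto
  finally show ?thesis
    using sum_Pow_binomial_weights[OF finite_all_edges] by simp
qed

lemma gnp_prob_disj_le:
  assumes "0 \<le> p" "p \<le> 1"
  shows "gnp_prob n p (\<lambda>E. P E \<or> Q E) \<le> gnp_prob n p P + gnp_prob n p Q"
proof -
  let ?w = "\<lambda>E. p ^ card E * (1 - p) ^ (card (all_edges n) - card E)"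
  let ?A = "{E. E \<subseteq> all_edges n \<and> P E}" and ?B = "{E. E \<subseteq> all_edges n \<and> Q E}"
  have "{E. E \<subseteq> all_edges n \<and> (P E \<or> Q E)} = ?A \<union> ?B"
    by auto
  moreover have "0 \<le> sum ?w (?A \<inter> ?B)"
    by (rule sum_nonneg) (use assms in auto)
  ultimately show ?thesis
    unfolding gnp_prob_def using sum_Un[of ?A ?B ?w] finite_all_edges by simp
qed

lemma gnp_prob_Bex_le:
  assumes "0 \<le> p" "p \<le> 1" "finite I" "\<And>i. i \<in> I \<Longrightarrow> gnp_prob n p (P i) \<le> b i"
  shows "gnp_prob n p (\<lambda>E. \<exists>i\<in>I. P i E) \<le> (\<Sum>i\<in>I. b i)"
  using assms(3,4)
proof (induction I rule: finite_induct)
  case empty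
  then show ?case
    by (simp add: gnp_prob_def)
next
  case (insert a I)
  have "gnp_prob n p (\<lambda>E. \<exists>i\<in>insert a I. P i E)
      \<le> gnp_prob n p (P a) + gnp_prob n p (\<lambda>E. \<exists>i\<in>I. P i E)"
    using gnp_prob_disj_le[OF assms(1,2)] by simp
  also have "\<dots> \<le> b a + (\<Sum>i\<in>I. b i)"
    using insert by (intro add_mono) auto
  finally show ?case
    using insert.hyps by simp
qed

lemma gnp_prob_superset:
  assumes "A \<subseteq> all_edges n"
  shows "gnp_prob n p (\<lambda>E. A \<subseteq> E) = p ^ card A"
proof -
  let ?U = "all_edges n"
  have finA: "finite A"
    using assms finite_all_edges finite_subset by blast
  have "{E. E \<subseteq> ?U \<and> A \<subseteq> E} = (\<union>) A ` Pow (?U - A)"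
  proof (intro equalityI subsetI)
    fix E assume "E \<in> {E. E \<subseteq> ?U \<and> A \<subseteq> E}"
    then have "E = A \<union> (E - A)" "E - A \<in> Pow (?U - A)"
      by auto
    then show "E \<in> (\<union>) A ` Pow (?U - A)"
      by blast
  qed (use assms in auto)
  moreover have "inj_on ((\<union>) A) (Pow (?U - A))"
    unfolding inj_on_def by blast
  ultimately have "gnp_prob n p (\<lambda>E. A \<subseteq> E)
      = (\<Sum>E'\<in>Pow (?U - A). p ^ card (A \<union> E') * (1 - p) ^ (card ?U - card (A \<union> E')))"
    unfolding gnp_prob_def by (simp add: sum.reindex)
  also have "\<dots> = (\<Sum>E'\<in>Pow (?U - A).
      p ^ card A * (p ^ card E' * (1 - p) ^ (card (?U - A) - card E')))"
  proof (rule sum.cong[OF refl])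
    fix E' assume "E' \<in> Pow (?U - A)"
    then have E': "E' \<subseteq> ?U - A" "finite E'"
      using finite_all_edges by (auto intro: rev_finite_subset)
    have "card (A \<union> E') = card A + card E'"
      using E' finA by (auto intro: card_Un_disjoint)
    moreover have "card (?U - A) = card ?U - card A"
      using finA assms by (rule card_Diff_subset)
    moreover have "card E' \<le> card (?U - A)"
      using E' finite_all_edges by (simp add: card_mono)
    moreover have "card A \<le> card ?U"
      using assms finite_all_edges by (rule card_mono[rotated])
    ultimately show "p ^ card (A \<union> E') * (1 - p) ^ (card ?U - card (A \<union> E'))
        = p ^ card A * (p ^ card E' * (1 - p) ^ (card (?U - A) - card E'))"
      by (simp add: power_add)
  qed
  also have "\<dots> = p ^ card A"
    using sum_Pow_binomial_weights[of "?U - A" p] finite_all_edges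
    by (simp add: sum_distrib_left[symmetric])
  finally show ?thesis .
qed

section \<open>Stars on disjoint sets\<close>

definition star_edges :: "(nat \<times> nat set) set \<Rightarrow> nat set set" where
  "star_edges S = (\<Union>(x, F)\<in>S. (\<lambda>v. {x, v}) ` F)"

lemma star_edges_subset_all_edges:
  assumes "X \<subseteq> {0..<n}" "\<forall>F\<in>\<F>. F \<subseteq> {0..<n} - X" "S \<subseteq> X \<times> \<F>"
  shows "star_edges S \<subseteq> all_edges n"
proof
  fix e assume "e \<in> star_edges S"
  then obtain x F v where "(x, F) \<in> S" "v \<in> F" "e = {x, v}"
    unfolding star_edges_def by auto
  with assms have "x \<in> {0..<n}" "v \<in> {0..<n}" "x \<noteq> v"
    by blast+
  with \<open>e = {x, v}\<close> show "e \<in> all_edges n"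
    unfolding all_edges_def by auto
qed

text \<open>Distinct pairs (x, F) need disjoint edge sets: an edge {x, v} with v \<in> F determines
  x as its endpoint in X, and then F as the member of the disjoint family containing v.\<close>

lemma card_star_edges:
  assumes "X \<subseteq> {0..<n}" "\<forall>F\<in>\<F>. F \<subseteq> {0..<n} - X \<and> card F = \<Delta>" "pairwise disjnt \<F>"
    and "S \<subseteq> X \<times> \<F>" "finite S"
  shows "card (star_edges S) = \<Delta> * card S"
proof -
  let ?star = "\<lambda>(x, F). (\<lambda>v. {x, v}) ` F"
  have card_star: "card (?star i) = \<Delta>" if "i \<in> S" for i
  proof -
    obtain x F where i: "i = (x, F)" by fastforce
    have "inj_on (\<lambda>v. {x, v}) F"
      unfolding inj_on_def by (auto simp: doubleton_eq_iff)
    then show ?thesis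
      using that assms(2,4) i by (auto simp: card_image)
  qed
  have finite_star: "finite (?star i)" if "i \<in> S" for i
  proof -
    obtain x F where i: "i = (x, F)" by fastforce
    with that assms(2,4) have "F \<subseteq> {0..<n}"
      by auto
    then have "finite F"
      by (rule finite_subset) simp
    then show ?thesis
      unfolding i by simp
  qed
  have disjoint_stars: "?star i \<inter> ?star j = {}" if "i \<in> S" "j \<in> S" "i \<noteq> j" for i j
  proof (rule ccontr)
    obtain x F x' F' where ij: "i = (x, F)" "j = (x', F')" by fastforce
    assume "?star i \<inter> ?star j \<noteq> {}"
    then obtain v w where vw: "v \<in> F" "w \<in> F'" "{x, v} = {x', w}"
      unfolding ij by auto
    have "x \<in> X" "x' \<in> X" "F \<in> \<F>" "F' \<in> \<F>"
      using that(1,2) ij assms(4) by auto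
    moreover have "v \<notin> X" "w \<notin> X"
      using vw(1,2) \<open>F \<in> \<F>\<close> \<open>F' \<in> \<F>\<close> assms(2) by blast+
    moreover have "(x = x' \<and> v = w) \<or> (x = w \<and> v = x')"
      using vw(3) by (simp add: doubleton_eq_iff)
    ultimately have "x = x'" "v = w"
      by auto
    have "F = F'"
    proof (rule ccontr)
      assume "F \<noteq> F'"
      with \<open>F \<in> \<F>\<close> \<open>F' \<in> \<F>\<close> assms(3) have "disjnt F F'"
        by (simp add: pairwise_def)
      with vw(1,2) \<open>v = w\<close> show False
        by (simp add: disjnt_iff)
    qed
    with that(3) ij \<open>x = x'\<close> show False
      by simp
  qed
  have "card (star_edges S) = (\<Sum>i\<in>S. card (?star i))"
    unfolding star_edges_def
    using finite_star disjoint_stars by (intro card_UN_disjoint[OF assms(5)]) auto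
  also have "\<dots> = \<Delta> * card S"
    using card_star by simp
  finally show ?thesis .
qed

lemma star_edges_subset_iff:
  "star_edges S \<subseteq> E \<longleftrightarrow> (\<forall>(x, F)\<in>S. F \<subseteq> nbhd E x)"
  unfolding star_edges_def nbhd_def by auto

lemma gnp_prob_stars_ge_le:
  assumes "0 \<le> p" "p \<le> 1" "X \<subseteq> {0..<n}"
    and "\<forall>F\<in>\<F>. F \<subseteq> {0..<n} - X \<and> card F = \<Delta>" "pairwise disjnt \<F>" "finite \<F>"
  shows "gnp_prob n p (\<lambda>E. k \<le> stars E X \<F>) \<le> real (card X * card \<F> choose k) * (p ^ \<Delta>) ^ k"
proof -
  let ?SS = "{S. S \<subseteq> X \<times> \<F> \<and> card S = k}"
  have "finite X"
    using assms(3) by (rule finite_subset) simp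
  with assms(6) have finite_XF: "finite (X \<times> \<F>)"
    by simp
  have finite_SS: "finite ?SS"
    by (rule finite_subset[of _ "Pow (X \<times> \<F>)"]) (use finite_XF in auto)
  have "gnp_prob n p (\<lambda>E. k \<le> stars E X \<F>) \<le> gnp_prob n p (\<lambda>E. \<exists>S\<in>?SS. star_edges S \<subseteq> E)"
  proof (rule gnp_prob_mono[OF assms(1,2)])
    fix E
    let ?stars = "{(x, F). x \<in> X \<and> F \<in> \<F> \<and> F \<subseteq> nbhd E x}"
    assume "k \<le> stars E X \<F>"
    then obtain S where S: "S \<subseteq> ?stars" "card S = k"
      unfolding stars_def by (rule obtain_subset_with_card_n)
    then have "S \<in> ?SS"
      by auto
    moreover have "star_edges S \<subseteq> E"
      using S(1) unfolding star_edges_subset_iff by auto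
    ultimately show "\<exists>S\<in>?SS. star_edges S \<subseteq> E" ..
  qed
  also have "\<dots> \<le> (\<Sum>S\<in>?SS. gnp_prob n p (\<lambda>E. star_edges S \<subseteq> E))"
    by (rule gnp_prob_Bex_le[OF assms(1,2) finite_SS order_refl])
  also have "\<dots> = (\<Sum>S\<in>?SS. (p ^ \<Delta>) ^ k)"
  proof (rule sum.cong[OF refl])
    fix S assume "S \<in> ?SS"
    then have S: "S \<subseteq> X \<times> \<F>" "card S = k"
      by auto
    then have "finite S"
      using finite_XF by (blast intro: finite_subset)
    have "star_edges S \<subseteq> all_edges n"
      by (rule star_edges_subset_all_edges[OF assms(3) _ S(1)]) (use assms(4) in blast)
    moreover have "card (star_edges S) = \<Delta> * k"
      using card_star_edges[OF assms(3-5) S(1) \<open>finite S\<close>] S(2) by simp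
    ultimately show "gnp_prob n p (\<lambda>E. star_edges S \<subseteq> E) = (p ^ \<Delta>) ^ k"
      by (simp add: gnp_prob_superset power_mult)
  qed
  also have "\<dots> = real (card X * card \<F> choose k) * (p ^ \<Delta>) ^ k"
    using n_subsets[OF finite_XF, of k] by (simp add: card_cartesian_product)
  finally show ?thesis .
qed

lemma gnp_prob_ex_stars_ge_le:
  assumes "0 \<le> p" "p \<le> 1"
  shows "gnp_prob n p (\<lambda>E. \<exists>X \<F>. X \<subseteq> {0..<n} \<and> card X = s \<and> card \<F> = f
           \<and> (\<forall>F\<in>\<F>. F \<subseteq> {0..<n} - X \<and> card F = \<Delta>) \<and> pairwise disjnt \<F> \<and> k \<le> stars E X \<F>)
    \<le> real (n choose s) * real ((n choose \<Delta>) choose f) * (real (s * f choose k) * (p ^ \<Delta>) ^ k)"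
proof -
  define \<D> where "\<D> = {F. F \<subseteq> {0..<n} \<and> card F = \<Delta>}"
  define Xs where "Xs = {X. X \<subseteq> {0..<n} \<and> card X = s}"
  define \<F>s where "\<F>s = {\<F>. \<F> \<subseteq> \<D> \<and> card \<F> = f}"
  have "finite \<D>"
    unfolding \<D>_def by (rule finite_subset[of _ "Pow {0..<n}"]) auto
  then have finite: "finite Xs" "finite \<F>s"
    unfolding Xs_def \<F>s_def by (auto intro: finite_subset[of _ "Pow {0..<n}"] finite_subset[of _ "Pow \<D>"])
  have card: "card Xs = n choose s" "card \<F>s = (n choose \<Delta>) choose f"
    using n_subsets[of "{0..<n}" s] n_subsets[of "{0..<n}" \<Delta>] n_subsets[OF \<open>finite \<D>\<close>, of f]
    unfolding Xs_def \<F>s_def \<D>_def by simp_all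
  let ?B = "\<lambda>X \<F> E. (\<forall>F\<in>\<F>. F \<subseteq> {0..<n} - X \<and> card F = \<Delta>) \<and> pairwise disjnt \<F> \<and> k \<le> stars E X \<F>"
  have "gnp_prob n p (\<lambda>E. \<exists>X \<F>. X \<subseteq> {0..<n} \<and> card X = s \<and> card \<F> = f \<and> ?B X \<F> E)
      \<le> gnp_prob n p (\<lambda>E. \<exists>X\<in>Xs. \<exists>\<F>\<in>\<F>s. ?B X \<F> E)"
    unfolding Xs_def \<F>s_def \<D>_def by (rule gnp_prob_mono[OF assms]) blast
  also have "\<dots> \<le> (\<Sum>X\<in>Xs. \<Sum>\<F>\<in>\<F>s. real (s * f choose k) * (p ^ \<Delta>) ^ k)"
  proof (intro gnp_prob_Bex_le[OF assms] finite)
    fix X \<F> assume "X \<in> Xs" "\<F> \<in> \<F>s"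
    then have X: "X \<subseteq> {0..<n}" "card X = s" and \<F>: "\<F> \<subseteq> \<D>" "card \<F> = f"
      unfolding Xs_def \<F>s_def by auto
    show "gnp_prob n p (?B X \<F>) \<le> real (s * f choose k) * (p ^ \<Delta>) ^ k"
    proof (cases "(\<forall>F\<in>\<F>. F \<subseteq> {0..<n} - X \<and> card F = \<Delta>) \<and> pairwise disjnt \<F>")
      case True
      have "finite \<F>"
        using \<F>(1) \<open>finite \<D>\<close> by (rule finite_subset)
      then have "gnp_prob n p (\<lambda>E. k \<le> stars E X \<F>) \<le> real (s * f choose k) * (p ^ \<Delta>) ^ k"
        using gnp_prob_stars_ge_le[OF assms X(1), of \<F> \<Delta> k] True X(2) \<F>(2) by simp
      then show ?thesis
        using True by simp
    next
      case False
      then have "?B X \<F> = (\<lambda>E. False)"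
        by auto
      then show ?thesis
        using assms by (simp add: gnp_prob_def)
    qed
  qed
  also have "\<dots> = real (n choose s) * real ((n choose \<Delta>) choose f) * (real (s * f choose k) * (p ^ \<Delta>) ^ k)"
    by (simp add: card)
  finally show ?thesis .
qed

section \<open>Numerical estimates\<close>

lemma power_div_fact_le_exp:
  fixes x :: real
  assumes "0 \<le> x"
  shows "x ^ n / fact n \<le> exp x"
proof -
  have exp_sums: "(\<lambda>n. x ^ n / fact n) sums exp x"
    using exp_converges[of x] by (simp add: divide_inverse mult.commute)
  have "(\<Sum>i\<in>{n}. x ^ i / fact i) \<le> (\<Sum>i. x ^ i / fact i)"
    by (rule sum_le_suminf) (use exp_sums assms in \<open>auto simp: sums_iff\<close>)
  then show ?thesis
    using exp_sums by (simp add: sums_iff)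
qed

lemma binomial_le_exp_ratio_power:
  assumes "j \<ge> 1"
  shows "real (m choose j) \<le> (exp 1 * real m / real j) ^ j"
proof -
  have "real j ^ j / fact j \<le> exp (real j)"
    by (rule power_div_fact_le_exp) simp
  also have "exp (real j) = exp 1 ^ j"
    by (metis exp_of_nat_mult mult.right_neutral)
  finally have fact_ge: "real j ^ j \<le> exp 1 ^ j * fact j"
    by (simp add: divide_le_eq)
  have binomial_fact: "real (m choose j) * fact j \<le> real m ^ j"
    using binomial_fact_pow[of m j] by (metis of_nat_fact of_nat_le_iff of_nat_mult of_nat_power)
  have "real (m choose j) * real j ^ j \<le> real (m choose j) * (exp 1 ^ j * fact j)"
    using fact_ge by (simp add: mult_left_mono)
  also have "\<dots> = exp 1 ^ j * (real (m choose j) * fact j)"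
    by simp
  also have "\<dots> \<le> exp 1 ^ j * real m ^ j"
    using binomial_fact by (simp add: mult_left_mono)
  finally have "real (m choose j) * real j ^ j \<le> exp 1 ^ j * real m ^ j" .
  then show ?thesis
    using assms by (simp add: field_simps)
qed

lemma binomial_mult_power_le:
  fixes q t :: real
  assumes "0 \<le> q" "0 < t" "t \<le> real k"
  shows "real (m choose k) * q ^ k \<le> (exp 1 * real m * q / t) ^ k"
proof -
  have "k \<ge> 1"
    using assms by linarith
  then have "real (m choose k) * q ^ k \<le> (exp 1 * real m / real k) ^ k * q ^ k"
    using assms(1) by (simp add: binomial_le_exp_ratio_power mult_right_mono)
  also have "\<dots> = (exp 1 * real m * q / real k) ^ k"
    by (simp add: power_mult_distrib[symmetric])
  also have "\<dots> \<le> (exp 1 * real m * q / t) ^ k"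
    using assms by (intro power_mono divide_left_mono) auto
  finally show ?thesis .
qed

lemma binomial_le_power: "real (m choose j) \<le> real m ^ j"
  by (cases "j \<le> m") (simp_all add: binomial_le_pow binomial_eq_0 flip: of_nat_power)

lemma binomial_binomial_le_power: "real ((n choose d) choose f) \<le> real n ^ (d * f)"
proof -
  have "real ((n choose d) choose f) \<le> real (n choose d) ^ f"
    by (rule binomial_le_power)
  also have "\<dots> \<le> (real n ^ d) ^ f"
    by (intro power_mono binomial_le_power) simp
  finally show ?thesis
    by (simp add: power_mult)
qed

lemma exp_div_6_power_mult_power_le:
  fixes x :: real
  assumes "1 \<le> x" "1 \<le> d" "4 * real d * ln x \<le> real j * (ln 6 - 1)"
  shows "(exp 1 / 6) ^ j * x ^ d \<le> 1 / x ^ 3"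
proof -
  have "real (d + 3) * ln x \<le> 4 * real d * ln x"
    using assms(1,2) by (intro mult_right_mono) auto
  with assms(3) have exponent: "real (d + 3) * ln x \<le> real j * (ln 6 - 1)"
    by linarith
  have "(exp 1 / 6) ^ j = exp (- (ln 6 - 1 :: real)) ^ j"
    by (simp add: exp_diff)
  also have "\<dots> = exp (- (real j * (ln 6 - 1)))"
    by (simp add: exp_of_nat_mult[symmetric] algebra_simps)
  finally have "(exp 1 / 6) ^ j = exp (- (real j * (ln 6 - 1)))" .
  moreover have power_eq: "x ^ i = exp (real i * ln x)" for i
    using assms(1) by (simp add: exp_of_nat_mult)
  moreover have "1 / x ^ 3 = exp (- (real 3 * ln x))"
    using power_eq[of 3] by (simp add: exp_minus divide_inverse)
  ultimately show ?thesis
    using exponent by (simp add: algebra_simps flip: exp_add)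
qed

lemma one_less_ln_6: "1 < ln (6 :: real)"
proof -
  have "ln (exp 1) < ln (6 :: real)"
    using exp_le by (subst ln_less_cancel_iff) auto
  then show ?thesis
    by simp
qed

lemma exp_ratio_power_mult_power_le_one:
  fixes \<xi> :: real and n s M :: nat
  assumes "\<xi> > 0" "s \<ge> 1" "real s \<le> \<xi> * real n" "M \<ge> 1"
    and "(exp 1 / 6) ^ (M - 1) \<le> 6 * \<xi> / exp 1 ^ 2"
  shows "(exp 1 * real n / real s) ^ s * (exp 1 * real s / (6 * \<xi> * real n)) ^ (M * s) \<le> 1"
proof -
  define a where "a = exp 1 * real s / (6 * \<xi> * real n)"
  have "0 < \<xi> * real n"
    using assms(2,3) by (metis of_nat_1 of_nat_le_iff less_le_trans zero_less_one)
  then have "real n > 0"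
    using assms(1) by (simp add: zero_less_mult_iff)
  then have a: "0 < a" "a \<le> exp 1 / 6"
    using assms(1-3) unfolding a_def by (simp_all add: field_simps)
  have "a ^ M = a * a ^ (M - 1)"
    using assms(4) by (cases M) auto
  moreover have "exp 1 * real n / real s * a = exp 1 ^ 2 / (6 * \<xi>)"
    using \<open>real n > 0\<close> assms(2) by (simp add: a_def field_simps power2_eq_square)
  ultimately have "exp 1 * real n / real s * a ^ M = exp 1 ^ 2 / (6 * \<xi>) * a ^ (M - 1)"
    by (metis mult.assoc)
  also have "\<dots> \<le> exp 1 ^ 2 / (6 * \<xi>) * (exp 1 / 6) ^ (M - 1)"
    using a assms(1) by (intro mult_left_mono power_mono) auto
  also have "\<dots> \<le> exp 1 ^ 2 / (6 * \<xi>) * (6 * \<xi> / exp 1 ^ 2)"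
    using assms(1,5) by (intro mult_left_mono) auto
  also have "\<dots> = 1"
    using assms(1) by simp
  finally have "(exp 1 * real n / real s * a ^ M) ^ s \<le> 1"
    using a \<open>real n > 0\<close> by (intro power_le_one) auto
  then show ?thesis
    unfolding a_def[symmetric] by (simp only: power_mult power_mult_distrib)
qed

lemma union_bound_term_le:
  fixes \<xi> q :: real and n s f M \<Delta> k :: nat
  assumes "n \<ge> 2" "q > 0" "\<Delta> > 0" "\<xi> > 0"
    and dense: "4 * real \<Delta> * ln (real n) \<le> 3 * \<xi> * (ln 6 - 1) * q * real n"
    and M: "M \<ge> 1" "(exp 1 / 6) ^ (M - 1) \<le> 6 * \<xi> / exp 1 ^ 2"
    and s: "s \<ge> 1" "real s \<le> \<xi> * real n" "real M * real s \<le> 3 * \<xi> * real n * q * real f"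
    and "f \<ge> 1" and k: "k = nat \<lceil>6 * \<xi> * real n * q * real f\<rceil>"
  shows "real (n choose s) * real ((n choose \<Delta>) choose f) * (real (s * f choose k) * q ^ k)
    \<le> 1 / real n ^ 3"
proof -
  define t where "t = 6 * \<xi> * real n * q * real f"
  define a where "a = exp 1 * real s / (6 * \<xi> * real n)"
  define j where "j = k - M * s"
  have n: "real n \<ge> 2"
    using assms(1) by simp
  have t: "0 < t" "t \<le> real k"
    unfolding t_def k using assms(2,4) \<open>f \<ge> 1\<close> n by auto
  moreover have "2 * real (M * s) \<le> t"
    using s(3) unfolding t_def by (simp add: algebra_simps)
  ultimately have k_split: "k = M * s + j" and j: "t / 2 \<le> real j"
    unfolding j_def by linarith+
  have a: "0 < a" "a \<le> exp 1 / 6"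
    using s(1,2) assms(4) n unfolding a_def by (simp_all add: field_simps)
  have vertices: "real (n choose s) \<le> (exp 1 * real n / real s) ^ s"
    using s(1) by (rule binomial_le_exp_ratio_power)
  have "real (s * f choose k) * q ^ k \<le> (exp 1 * real (s * f) * q / t) ^ k"
    using assms(2) t by (intro binomial_mult_power_le) auto
  also have "exp 1 * real (s * f) * q / t = a"
    unfolding t_def a_def using assms(2,4) \<open>f \<ge> 1\<close> n by (simp add: field_simps)
  also have "a ^ k \<le> a ^ (M * s) * (exp 1 / 6) ^ j"
    unfolding k_split power_add using a by (intro mult_left_mono power_mono) auto
  finally have stars: "real (s * f choose k) * q ^ k \<le> a ^ (M * s) * (exp 1 / 6) ^ j" .
  have "4 * real (\<Delta> * f) * ln (real n) \<le> t / 2 * (ln 6 - 1)"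
    using mult_left_mono[OF dense, of "real f"] unfolding t_def by (simp add: algebra_simps)
  also have "\<dots> \<le> real j * (ln 6 - 1)"
    using j one_less_ln_6 by (intro mult_right_mono) auto
  finally have "(exp 1 / 6) ^ j * real n ^ (\<Delta> * f) \<le> 1 / real n ^ 3"
    using n assms(3) \<open>f \<ge> 1\<close> by (intro exp_div_6_power_mult_power_le) (auto simp: Suc_le_eq)
  moreover have "(exp 1 * real n / real s) ^ s * a ^ (M * s) \<le> 1"
    unfolding a_def using assms(4) s(1,2) M by (rule exp_ratio_power_mult_power_le_one)
  ultimately have "((exp 1 * real n / real s) ^ s * a ^ (M * s)) * ((exp 1 / 6) ^ j * real n ^ (\<Delta> * f))
      \<le> 1 * (1 / real n ^ 3)"
    using a by (intro mult_mono) auto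
  moreover have "real (n choose s) * real ((n choose \<Delta>) choose f) * (real (s * f choose k) * q ^ k)
      \<le> (exp 1 * real n / real s) ^ s * real n ^ (\<Delta> * f) * (a ^ (M * s) * (exp 1 / 6) ^ j)"
    by (rule mult_mono[OF mult_mono[OF vertices binomial_binomial_le_power] stars]) (use assms(2) in auto)
  ultimately show ?thesis
    by (simp add: algebra_simps)
qed

section \<open>The union bound\<close>

definition few_stars :: "nat \<Rightarrow> nat \<Rightarrow> real \<Rightarrow> real \<Rightarrow> real \<Rightarrow> nat set set \<Rightarrow> bool" where
  "few_stars n \<Delta> \<xi> \<nu> p E \<longleftrightarrow>
     (\<forall>X \<F>. X \<subseteq> {0..<n} \<longrightarrow>
        (\<forall>F\<in>\<F>. F \<subseteq> {0..<n} - X \<and> card F = \<Delta>) \<longrightarrow>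
        pairwise disjnt \<F> \<longrightarrow>
        real (card X) \<le> \<nu> * real n * p ^ \<Delta> * real (card \<F>) \<longrightarrow>
        real (card X) \<le> \<xi> * real n \<longrightarrow>
        real (card \<F>) \<le> \<xi> * real n \<longrightarrow>
        real (stars E X \<F>) \<le> p ^ \<Delta> * real (card X) * real (card \<F>)
                              + 6 * \<xi> * real n * p ^ \<Delta> * real (card \<F>))"

lemma not_few_stars_imp_many_stars:
  assumes "\<not> few_stars n \<Delta> \<xi> \<nu> p E" "0 \<le> p" "0 \<le> \<xi>"
  shows "\<exists>s\<in>{1..n}. \<exists>f\<in>{1..nat \<lceil>\<xi> * real n\<rceil>}.
    real s \<le> \<xi> * real n \<and> real s \<le> \<nu> * real n * p ^ \<Delta> * real f \<and>
    (\<exists>X \<F>. X \<subseteq> {0..<n} \<and> card X = s \<and> card \<F> = f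
       \<and> (\<forall>F\<in>\<F>. F \<subseteq> {0..<n} - X \<and> card F = \<Delta>) \<and> pairwise disjnt \<F>
       \<and> nat \<lceil>6 * \<xi> * real n * p ^ \<Delta> * real f\<rceil> \<le> stars E X \<F>)"
proof -
  obtain X \<F> where X: "X \<subseteq> {0..<n}" and \<F>: "\<forall>F\<in>\<F>. F \<subseteq> {0..<n} - X \<and> card F = \<Delta>"
    and disjoint: "pairwise disjnt \<F>"
    and sizes: "real (card X) \<le> \<nu> * real n * p ^ \<Delta> * real (card \<F>)"
      "real (card X) \<le> \<xi> * real n" "real (card \<F>) \<le> \<xi> * real n"
    and many: "real (stars E X \<F>) > p ^ \<Delta> * real (card X) * real (card \<F>)
                                   + 6 * \<xi> * real n * p ^ \<Delta> * real (card \<F>)"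
    using assms(1) unfolding few_stars_def by (auto simp: not_le)
  have "0 \<le> p ^ \<Delta> * real (card X) * real (card \<F>)" "0 \<le> 6 * \<xi> * real n * p ^ \<Delta> * real (card \<F>)"
    using assms(2,3) by simp_all
  with many have stars: "real (stars E X \<F>) > 6 * \<xi> * real n * p ^ \<Delta> * real (card \<F>)"
    "stars E X \<F> > 0"
    by linarith+
  then have "X \<noteq> {}" "\<F> \<noteq> {}"
    unfolding stars_def by (auto simp: card_gt_0_iff)
  moreover have "finite X"
    using X by (rule finite_subset) simp
  moreover have "finite \<F>"
    using \<F> by (intro finite_subset[of \<F> "Pow {0..<n}"]) auto
  ultimately have "1 \<le> card X" "1 \<le> card \<F>"
    by (simp_all add: Suc_le_eq card_gt_0_iff)
  moreover have "card X \<le> n"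
    using card_mono[OF _ X] by simp
  moreover have "real (card \<F>) \<le> real_of_int \<lceil>\<xi> * real n\<rceil>"
    using sizes(3) le_of_int_ceiling order_trans by blast
  then have "card \<F> \<le> nat \<lceil>\<xi> * real n\<rceil>"
    by linarith
  moreover have "nat \<lceil>6 * \<xi> * real n * p ^ \<Delta> * real (card \<F>)\<rceil> \<le> stars E X \<F>"
    using stars(1) by (simp add: nat_le_iff ceiling_le_iff)
  ultimately show ?thesis
    using X \<F> disjoint sizes(1,2)
    by (intro bexI[of _ "card X"] bexI[of _ "card \<F>"] conjI exI[of _ X] exI[of _ \<F>]) auto
qed

lemma gnp_prob_many_stars_le:
  fixes \<xi> p :: real and n M \<Delta> s f :: nat
  assumes "n \<ge> 2" "0 \<le> p" "p \<le> 1" "\<Delta> > 0" "\<xi> > 0"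
    and dense: "4 * real \<Delta> * ln (real n) \<le> 3 * \<xi> * (ln 6 - 1) * p ^ \<Delta> * real n"
    and M: "M \<ge> 1" "(exp 1 / 6) ^ (M - 1) \<le> 6 * \<xi> / exp 1 ^ 2"
    and "s \<ge> 1" "real s \<le> \<xi> * real n" "real M * real s \<le> 3 * \<xi> * real n * p ^ \<Delta> * real f"
    and "f \<ge> 1"
  shows "gnp_prob n p (\<lambda>E. \<exists>X \<F>. X \<subseteq> {0..<n} \<and> card X = s \<and> card \<F> = f
           \<and> (\<forall>F\<in>\<F>. F \<subseteq> {0..<n} - X \<and> card F = \<Delta>) \<and> pairwise disjnt \<F>
           \<and> nat \<lceil>6 * \<xi> * real n * p ^ \<Delta> * real f\<rceil> \<le> stars E X \<F>)
    \<le> 1 / real n ^ 3"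
proof -
  let ?k = "nat \<lceil>6 * \<xi> * real n * p ^ \<Delta> * real f\<rceil>"
  have "0 < 4 * real \<Delta> * ln (real n)"
    using assms(1,4) by simp
  then have "0 < 3 * \<xi> * (ln 6 - 1) * p ^ \<Delta> * real n"
    using dense by linarith
  then have q: "0 < p ^ \<Delta>"
    using assms(2,5) one_less_ln_6 by (simp add: zero_less_mult_iff)
  have "gnp_prob n p (\<lambda>E. \<exists>X \<F>. X \<subseteq> {0..<n} \<and> card X = s \<and> card \<F> = f
           \<and> (\<forall>F\<in>\<F>. F \<subseteq> {0..<n} - X \<and> card F = \<Delta>) \<and> pairwise disjnt \<F> \<and> ?k \<le> stars E X \<F>)
      \<le> real (n choose s) * real ((n choose \<Delta>) choose f) * (real (s * f choose ?k) * (p ^ \<Delta>) ^ ?k)"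
    by (rule gnp_prob_ex_stars_ge_le[OF assms(2,3)])
  also have "\<dots> \<le> 1 / real n ^ 3"
    using assms(9-12) by (intro union_bound_term_le[OF assms(1) q assms(4,5) dense M]) auto
  finally show ?thesis .
qed

lemma gnp_prob_not_few_stars_le:
  fixes \<xi> p :: real and n M \<Delta> :: nat
  assumes "n \<ge> 2" "0 \<le> p" "p \<le> 1" "\<Delta> > 0" "\<xi> > 0"
    and dense: "4 * real \<Delta> * ln (real n) \<le> 3 * \<xi> * (ln 6 - 1) * p ^ \<Delta> * real n"
    and M: "M \<ge> 1" "(exp 1 / 6) ^ (M - 1) \<le> 6 * \<xi> / exp 1 ^ 2"
  shows "gnp_prob n p (\<lambda>E. \<not> few_stars n \<Delta> \<xi> (3 * \<xi> / real M) p E)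
    \<le> real n * (\<xi> * real n + 1) / real n ^ 3"
proof -
  define m where "m = nat \<lceil>\<xi> * real n\<rceil>"
  let ?many_stars = "\<lambda>s f E. \<exists>X \<F>. X \<subseteq> {0..<n} \<and> card X = s \<and> card \<F> = f
    \<and> (\<forall>F\<in>\<F>. F \<subseteq> {0..<n} - X \<and> card F = \<Delta>) \<and> pairwise disjnt \<F>
    \<and> nat \<lceil>6 * \<xi> * real n * p ^ \<Delta> * real f\<rceil> \<le> stars E X \<F>"
  let ?bad = "\<lambda>s f E. real s \<le> \<xi> * real n \<and> real s \<le> 3 * \<xi> / real M * real n * p ^ \<Delta> * real f
    \<and> ?many_stars s f E"
  have bad: "gnp_prob n p (?bad s f) \<le> 1 / real n ^ 3" if "s \<in> {1..n}" "f \<in> {1..m}" for s f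
  proof (cases "real s \<le> \<xi> * real n \<and> real s \<le> 3 * \<xi> / real M * real n * p ^ \<Delta> * real f")
    case True
    then have "real M * real s \<le> 3 * \<xi> * real n * p ^ \<Delta> * real f"
      using M(1) by (simp add: field_simps)
    have "gnp_prob n p (?bad s f) = gnp_prob n p (?many_stars s f)"
      by (simp only: True simp_thms)
    also have "\<dots> \<le> 1 / real n ^ 3"
      by (rule gnp_prob_many_stars_le[OF assms(1-5) dense M _ _ \<open>real M * real s \<le> _\<close>])
        (use that True in auto)
    finally show ?thesis .
  next
    case False
    then have "?bad s f = (\<lambda>E. False)"
      by auto
    then show ?thesis
      by (simp add: gnp_prob_def)
  qed
  have "gnp_prob n p (\<lambda>E. \<not> few_stars n \<Delta> \<xi> (3 * \<xi> / real M) p E)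
      \<le> gnp_prob n p (\<lambda>E. \<exists>s\<in>{1..n}. \<exists>f\<in>{1..m}. ?bad s f E)"
  proof (rule gnp_prob_mono[OF assms(2,3)])
    fix E assume "\<not> few_stars n \<Delta> \<xi> (3 * \<xi> / real M) p E"
    then show "\<exists>s\<in>{1..n}. \<exists>f\<in>{1..m}. ?bad s f E"
      unfolding m_def using assms(2) less_imp_le[OF assms(5)] by (rule not_few_stars_imp_many_stars)
  qed
  also have "\<dots> \<le> (\<Sum>s\<in>{1..n}. \<Sum>f\<in>{1..m}. 1 / real n ^ 3)"
    using bad by (intro gnp_prob_Bex_le[OF assms(2,3)]) auto
  also have "\<dots> = real n * real m / real n ^ 3"
    by simp
  also have "\<dots> \<le> real n * (\<xi> * real n + 1) / real n ^ 3"
    unfolding m_def using assms(1,5)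
    by (intro divide_right_mono mult_left_mono) (auto simp: of_nat_ceiling ceiling_correct)
  finally show ?thesis .
qed

lemma gnp_prob_few_stars_tendsto_1:
  fixes \<xi> :: real and p :: "nat \<Rightarrow> real"
  assumes "\<Delta> > 0" "\<xi> > 0" "M \<ge> 1" "(exp 1 / 6) ^ (M - 1) \<le> 6 * \<xi> / exp 1 ^ 2"
    and p: "\<forall>n. 0 \<le> p n \<and> p n \<le> 1"
    and dense: "\<forall>\<^sub>F n in sequentially. 4 * real \<Delta> * ln (real n) \<le> 3 * \<xi> * (ln 6 - 1) * p n ^ \<Delta> * real n"
  shows "(\<lambda>n. gnp_prob n (p n) (few_stars n \<Delta> \<xi> (3 * \<xi> / real M) (p n))) \<longlonglongrightarrow> 1"
proof -
  let ?lb = "\<lambda>n. 1 - real n * (\<xi> * real n + 1) / real n ^ 3"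
  have compl: "gnp_prob n (p n) (few_stars n \<Delta> \<xi> (3 * \<xi> / real M) (p n))
      + gnp_prob n (p n) (\<lambda>E. \<not> few_stars n \<Delta> \<xi> (3 * \<xi> / real M) (p n) E) = 1" for n
    by (rule gnp_prob_compl)
  have "\<forall>\<^sub>F n in sequentially. ?lb n \<le> gnp_prob n (p n) (few_stars n \<Delta> \<xi> (3 * \<xi> / real M) (p n))"
    using dense eventually_ge_at_top[of 2]
  proof eventually_elim
    case (elim n)
    then have "gnp_prob n (p n) (\<lambda>E. \<not> few_stars n \<Delta> \<xi> (3 * \<xi> / real M) (p n) E)
        \<le> real n * (\<xi> * real n + 1) / real n ^ 3"
      using p assms(1-4) by (intro gnp_prob_not_few_stars_le) auto
    then show ?case
      using compl[of n] by linarith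
  qed
  moreover have "gnp_prob n (p n) (few_stars n \<Delta> \<xi> (3 * \<xi> / real M) (p n)) \<le> 1" for n
    using compl[of n] gnp_prob_nonneg[of "p n" n "\<lambda>E. \<not> few_stars n \<Delta> \<xi> (3 * \<xi> / real M) (p n) E"] p
    by auto
  moreover have "?lb \<longlonglongrightarrow> 1"
    by real_asymp
  ultimately show ?thesis
    by (rule tendsto_sandwich[OF _ always_eventually[OF allI] _ tendsto_const])
qed

lemma le_power_of_powr_inverse_le:
  fixes y p :: real
  assumes "0 < y" "0 < d" "y powr (1 / real d) \<le> p"
  shows "y \<le> p ^ d"
proof -
  have "y = (y powr (1 / real d)) ^ d"
    using assms(1,2) by (simp add: powr_realpow[symmetric] powr_powr)
  also have "\<dots> \<le> p ^ d"
    using assms(3) by (intro power_mono) auto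
  finally show ?thesis .
qed

lemma ln_ratio_le_power_of_threshold:
  fixes K p :: real
  assumes "0 < K" "0 < \<Delta>" "2 \<le> n"
    and "K powr (1 / real \<Delta>) * (ln (real n) / real n) powr (1 / real \<Delta>) \<le> p"
  shows "K * ln (real n) \<le> p ^ \<Delta> * real n"
proof -
  have "(K * (ln (real n) / real n)) powr (1 / real \<Delta>)
      = K powr (1 / real \<Delta>) * (ln (real n) / real n) powr (1 / real \<Delta>)"
    using assms(1) by (intro powr_mult)
  with assms have "K * (ln (real n) / real n) \<le> p ^ \<Delta>"
    by (intro le_power_of_powr_inverse_le) auto
  with assms(3) show ?thesis
    by (simp add: field_simps)
qed

theorem lemma6p3:
  fixes \<Delta> :: nat and \<xi> :: real
  assumes "\<Delta> > 0" and "\<xi> > 0"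
  shows "\<exists>\<nu> > 0. \<exists>c > 0. \<forall>p :: nat \<Rightarrow> real.
    (\<forall>n. 0 \<le> p n \<and> p n \<le> 1) \<longrightarrow>
    (\<forall>\<^sub>F n in sequentially. p n \<ge> c * (ln (real n) / real n) powr (1 / real \<Delta>)) \<longrightarrow>
    ((\<lambda>n. gnp_prob n (p n) (\<lambda>E.
        \<forall>X \<F>. X \<subseteq> {0..<n} \<longrightarrow>
          (\<forall>F\<in>\<F>. F \<subseteq> {0..<n} - X \<and> card F = \<Delta>) \<longrightarrow>
          pairwise disjnt \<F> \<longrightarrow>
          real (card X) \<le> \<nu> * real n * p n ^ \<Delta> * real (card \<F>) \<longrightarrow>
          real (card X) \<le> \<xi> * real n \<longrightarrow>
          real (card \<F>) \<le> \<xi> * real n \<longrightarrow>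
          real (stars E X \<F>) \<le> p n ^ \<Delta> * real (card X) * real (card \<F>)
                                + 6 * \<xi> * real n * p n ^ \<Delta> * real (card \<F>)))
     \<longlonglongrightarrow> 1)"
proof -
  obtain M0 where M0: "(exp 1 / 6) ^ M0 < 6 * \<xi> / exp 1 ^ 2"
    using real_arch_pow_inv[of "6 * \<xi> / exp 1 ^ 2" "exp 1 / 6"] assms(2) exp_le by auto
  define M where "M = Suc M0"
  define K where "K = 4 * real \<Delta> / (3 * \<xi> * (ln 6 - 1))"
  have K: "K > 0"
    unfolding K_def using assms one_less_ln_6 by simp
  show ?thesis
    unfolding few_stars_def[symmetric]
  proof (rule exI[of _ "3 * \<xi> / real M"], intro conjI exI[of _ "K powr (1 / real \<Delta>)"] allI impI)
    fix p :: "nat \<Rightarrow> real"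
    assume p: "\<forall>n. 0 \<le> p n \<and> p n \<le> 1"
      and threshold: "\<forall>\<^sub>F n in sequentially.
        p n \<ge> K powr (1 / real \<Delta>) * (ln (real n) / real n) powr (1 / real \<Delta>)"
    have dense: "\<forall>\<^sub>F n in sequentially.
        4 * real \<Delta> * ln (real n) \<le> 3 * \<xi> * (ln 6 - 1) * p n ^ \<Delta> * real n"
      using threshold eventually_ge_at_top[of 2]
    proof eventually_elim
      case (elim n)
      then have "K * ln (real n) \<le> p n ^ \<Delta> * real n"
        using K assms(1) by (intro ln_ratio_le_power_of_threshold) auto
      with assms(2) one_less_ln_6 show ?case
        by (simp add: K_def field_simps)
    qed
    show "(\<lambda>n. gnp_prob n (p n) (\<lambda>E. few_stars n \<Delta> \<xi> (3 * \<xi> / real M) (p n) E)) \<longlonglongrightarrow> 1"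
      by (rule gnp_prob_few_stars_tendsto_1[OF assms _ _ p dense]) (use M0 in \<open>simp_all add: M_def\<close>)
  qed (use assms K in \<open>simp_all add: M_def\<close>)
qed

end
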